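(* Let $M\in\mathrm{rep}\,G_{m,n}$ be arbitrary and $\ast\in\{ss,cc,tot\}$. Then $$\sum_{I\in\mathbb{I}_{m,n}}\tilde d^\ast_M(I)\cdot\underline{\dim}(V_I)=\underline{\dim}(M),$$ where $\underline{\dim}(X)=(\dim X(v))_{v}$ is the dimension vector indexed by the vertices $v$ of $G_{m,n}$.
   Context: Fix a field $K$. For integers $m,n\ge1$, $G_{m,n}$ is the equioriented commutative $m\times n$ grid: the quiver with vertex set $\{(i,j):1\le i\le m,\ 1\le j\le n\}$ and arrows $(i,j)\to(i,j+1)$ and $(i,j)\to(i+1,j)$, bound by all commutativity relations; $\mathrm{rep}\,G_{m,n}$ is its category of finite-dimensional representations over $K$ satisfying the relations. An interval of $G_{m,n}$ is a nonempty full subquiver $I$ which is connected (as an undirected graph) and convex (whenever $x,y\in I_0$ and there are paths $x\to z$, $z\to y$ in $G_{m,n}$, then $z\in I_0$); $\mathbb{I}_{m,n}$ is the set of intervals ordered by inclusion of vertex sets. The interval representation $V_I$ has $K$ at vertices of $I$, $0$ elsewhere, identity maps on arrows inside $I$ and zero maps otherwise. Essential vertices: $I^{ss}_0$ is the set of sources and sinks of the quiver $I$; $I^{cc}_0=I_0\cap(\mathrm{pr}_1(I^{ss}_0)\times\mathrm{pr}_2(I^{ss}_0))$ with $\mathrm{pr}_1,\mathrm{pr}_2$ coordinate projections; $I^{tot}_0=I_0$. Let $KG_{m,n}$ be the $K$-linear category whose objects are the vertices and whose morphisms are $K$-linear combinations of paths modulo the commutativity relations; representations are $K$-linear functors $KG_{m,n}\to\mathrm{vect}_K$.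 For $\ast\in\{ss,cc,tot\}$, $\mathcal{C}^\ast_I$ is the full subcategory of $KG_{m,n}$ on $I^\ast_0$, and $M^\ast_I:=M|_{\mathcal{C}^\ast_I}$. The compressed multiplicity $\bar d^\ast_M(I)$ is the multiplicity of the indecomposable $(V_I)^\ast_I$ as a direct summand of $M^\ast_I$. Let $\mu$ be the Möbius function of the finite poset $\mathbb{I}_{m,n}$ ($\mu([I,I])=1$, $\mu([I,J])=-\sum_{I\le L<J}\mu([I,L])$ for $I<J$), and $\tilde d^\ast_M(I):=\sum_{J\ge I}\mu([I,J])\,\bar d^\ast_M(J)$. *)

theory Defs
  imports "Jordan_Normal_Form.Matrix"
begin

type_synonym vert = "nat \<times> nat"

definition grid_verts :: "nat \<Rightarrow> nat \<Rightarrow> vert set" where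
  "grid_verts m n = {(i,j). 1 \<le> i \<and> i \<le> m \<and> 1 \<le> j \<and> j \<le> n}"

text \<open>There is a path x to y in G_{m,n} iff x is componentwise below y.\<close>
definition vle :: "vert \<Rightarrow> vert \<Rightarrow> bool" where
  "vle x y \<longleftrightarrow> fst x \<le> fst y \<and> snd x \<le> snd y"

definition grid_arrow :: "nat \<Rightarrow> nat \<Rightarrow> vert \<Rightarrow> vert \<Rightarrow> bool" where
  "grid_arrow m n x y \<longleftrightarrow> x \<in> grid_verts m n \<and> y \<in> grid_verts m n \<and>
     (y = (fst x, snd x + 1) \<or> y = (fst x + 1, snd x))"

definition connected_verts :: "nat \<Rightarrow> nat \<Rightarrow> vert set \<Rightarrow> bool" where
  "connected_verts m n I \<longleftrightarrow> (\<forall>x\<in>I. \<forall>y\<in>I.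
     (\<lambda>a b. a \<in> I \<and> b \<in> I \<and> (grid_arrow m n a b \<or> grid_arrow m n b a))\<^sup>*\<^sup>* x y)"

definition convex_verts :: "nat \<Rightarrow> nat \<Rightarrow> vert set \<Rightarrow> bool" where
  "convex_verts m n I \<longleftrightarrow> (\<forall>x\<in>I. \<forall>y\<in>I. \<forall>z\<in>grid_verts m n. vle x z \<and> vle z y \<longrightarrow> z \<in> I)"

text \<open>Intervals are identified with their vertex sets (full subquivers).\<close>
definition intervals :: "nat \<Rightarrow> nat \<Rightarrow> vert set set" where
  "intervals m n = {I. I \<noteq> {} \<and> I \<subseteq> grid_verts m n \<and> connected_verts m n I \<and> convex_verts m n I}"

datatype ess = SS | CC | TOT

definition sources :: "nat \<Rightarrow> nat \<Rightarrow> vert set \<Rightarrow> vert set" where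
  "sources m n I = {x\<in>I. \<not> (\<exists>y\<in>I. grid_arrow m n y x)}"

definition sinks :: "nat \<Rightarrow> nat \<Rightarrow> vert set \<Rightarrow> vert set" where
  "sinks m n I = {x\<in>I. \<not> (\<exists>y\<in>I. grid_arrow m n x y)}"

definition ess_verts :: "nat \<Rightarrow> nat \<Rightarrow> ess \<Rightarrow> vert set \<Rightarrow> vert set" where
  "ess_verts m n e I = (case e of
      SS \<Rightarrow> sources m n I \<union> sinks m n I
    | CC \<Rightarrow> I \<inter> (fst ` (sources m n I \<union> sinks m n I) \<times> snd ` (sources m n I \<union> sinks m n I))
    | TOT \<Rightarrow> I)"

text \<open>Hom(x,y) in KG_{m,n} is K (one path class) if x \<le> y and 0 otherwise. Hence a
  K-linear functor on the full subcategory on a vertex set S is given by a dimension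
  K^(d x) at each x \<in> S and a matrix f x y : K^(d x) \<rightarrow> K^(d y) for x \<le> y in S,
  functorially. Values outside S are irrelevant.\<close>

type_synonym 'k rep = "(vert \<Rightarrow> nat) \<times> (vert \<Rightarrow> vert \<Rightarrow> 'k mat)"

definition is_rep :: "vert set \<Rightarrow> 'k::field rep \<Rightarrow> bool" where
  "is_rep S M \<longleftrightarrow>
     (\<forall>x\<in>S. snd M x x = 1\<^sub>m (fst M x)) \<and>
     (\<forall>x\<in>S. \<forall>y\<in>S. vle x y \<longrightarrow> snd M x y \<in> carrier_mat (fst M y) (fst M x)) \<and>
     (\<forall>x\<in>S. \<forall>y\<in>S. \<forall>z\<in>S. vle x y \<and> vle y z \<longrightarrow> snd M x z = snd M y z * snd M x y)"

definition rep_iso :: "vert set \<Rightarrow> 'k::field rep \<Rightarrow> 'k rep \<Rightarrow> bool" where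
  "rep_iso S M N \<longleftrightarrow> (\<exists>\<phi>. (\<forall>x\<in>S. \<phi> x \<in> carrier_mat (fst N x) (fst M x) \<and> invertible_mat (\<phi> x)) \<and>
     (\<forall>x\<in>S. \<forall>y\<in>S. vle x y \<longrightarrow> snd N x y * \<phi> x = \<phi> y * snd M x y))"

definition rep_dsum :: "'k::field rep \<Rightarrow> 'k rep \<Rightarrow> 'k rep" where
  "rep_dsum M N = ((\<lambda>x. fst M x + fst N x),
     (\<lambda>x y. four_block_mat (snd M x y) (0\<^sub>m (fst M y) (fst N x))
                           (0\<^sub>m (fst N y) (fst M x)) (snd N x y)))"

definition rep_zero :: "'k::field rep" where
  "rep_zero = ((\<lambda>x. 0), (\<lambda>x y. 0\<^sub>m 0 0))"

fun rep_pow :: "'k::field rep \<Rightarrow> nat \<Rightarrow> 'k rep" where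
  "rep_pow N 0 = rep_zero"
| "rep_pow N (Suc k) = rep_dsum N (rep_pow N k)"

definition summand_mult :: "vert set \<Rightarrow> 'k::field rep \<Rightarrow> 'k rep \<Rightarrow> nat" where
  "summand_mult S N X = (GREATEST k. \<exists>Y. is_rep S Y \<and> rep_iso S X (rep_dsum (rep_pow N k) Y))"

definition interval_rep :: "vert set \<Rightarrow> 'k::field rep" where
  "interval_rep I = ((\<lambda>x. if x \<in> I then 1 else 0),
     (\<lambda>x y. if x \<in> I \<and> y \<in> I then 1\<^sub>m 1
            else 0\<^sub>m (if y \<in> I then 1 else 0) (if x \<in> I then 1 else 0)))"

text \<open>Restriction M^*_I to C^*_I is the same data regarded on ess_verts; the compressed
  multiplicity is the multiplicity of (V_I)^*_I as a summand of M^*_I.\<close>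
definition compressed_mult :: "nat \<Rightarrow> nat \<Rightarrow> ess \<Rightarrow> 'k::field rep \<Rightarrow> vert set \<Rightarrow> nat" where
  "compressed_mult m n e M I = summand_mult (ess_verts m n e I) (interval_rep I) M"

definition moebius :: "'a set set \<Rightarrow> 'a set \<Rightarrow> 'a set \<Rightarrow> int" where
  "moebius P = (THE \<mu>. \<forall>I J. \<mu> I J =
      (if I \<in> P \<and> J \<in> P \<and> I \<subseteq> J then
         (if I = J then 1 else - (\<Sum>L\<in>{L\<in>P. I \<subseteq> L \<and> L \<subset> J}. \<mu> I L))
       else 0))"

definition moebius_inv_mult :: "nat \<Rightarrow> nat \<Rightarrow> ess \<Rightarrow> 'k::field rep \<Rightarrow> vert set \<Rightarrow> int" where
  "moebius_inv_mult m n e M I =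
     (\<Sum>J\<in>{J\<in>intervals m n. I \<subseteq> J}. moebius (intervals m n) I J * int (compressed_mult m n e M J))"

end

theory Submission
  imports Defs
begin

text \<open>The dimension of M(v) is counted only by intervals containing v. By Moebius inversion
  on the poset of intervals, the inverted multiplicities summed over all intervals containing
  v give back the compressed multiplicity of the singleton interval {v}. A singleton is its
  own set of essential vertices, and a vector space of dimension d is the d-fold sum of K,
  so that multiplicity is dim M(v).\<close>

text \<open>A solution of the recursion in moebius_def; the finiteness guard makes card J a
  termination measure.\<close>

function moebius_rec :: "'a set set \<Rightarrow> 'a set \<Rightarrow> 'a set \<Rightarrow> int" where
  "moebius_rec P I J = (if finite J \<and> I \<in> P \<and> J \<in> P \<and> I \<subseteq> J then
      (if I = J then 1 else - (\<Sum>L\<in>{L\<in>P. I \<subseteq> L \<and> L \<subset> J}. moebius_rec P I L))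
    else 0)"
  by auto
termination
  by (relation "measure (\<lambda>(P, I, J). card J)") (auto intro: psubset_card_mono)

declare moebius_rec.simps [simp del]

lemma moebius_eq_moebius_rec:
  assumes fin: "\<forall>J\<in>P. finite J"
  shows "moebius P = moebius_rec P"
  unfolding moebius_def
proof (rule the_equality)
  show "\<forall>I J. moebius_rec P I J = (if I \<in> P \<and> J \<in> P \<and> I \<subseteq> J then
      (if I = J then 1 else - (\<Sum>L\<in>{L\<in>P. I \<subseteq> L \<and> L \<subset> J}. moebius_rec P I L)) else 0)"
    using fin by (subst moebius_rec.simps) auto
next
  fix \<mu> :: "'a set \<Rightarrow> 'a set \<Rightarrow> int"
  assume \<mu>: "\<forall>I J. \<mu> I J = (if I \<in> P \<and> J \<in> P \<and> I \<subseteq> J then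
      (if I = J then 1 else - (\<Sum>L\<in>{L\<in>P. I \<subseteq> L \<and> L \<subset> J}. \<mu> I L)) else 0)"
  have "\<mu> I J = moebius_rec P I J" if "finite J" for I J
    using that
  proof (induction J rule: finite_psubset_induct)
    case (psubset J)
    then have "(\<Sum>L\<in>{L\<in>P. I \<subseteq> L \<and> L \<subset> J}. \<mu> I L) = (\<Sum>L\<in>{L\<in>P. I \<subseteq> L \<and> L \<subset> J}. moebius_rec P I L)"
      by (intro sum.cong) auto
    with \<mu> have "\<mu> I J = (if I \<in> P \<and> J \<in> P \<and> I \<subseteq> J then
        (if I = J then 1 else - (\<Sum>L\<in>{L\<in>P. I \<subseteq> L \<and> L \<subset> J}. moebius_rec P I L)) else 0)"
      by metis
    with psubset.hyps show ?case
      by (subst moebius_rec.simps) simp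
  qed
  moreover have "\<mu> I J = moebius_rec P I J" if "infinite J" for I J
    using that fin \<mu> by (subst moebius_rec.simps) auto
  ultimately show "\<mu> = moebius_rec P"
    by blast
qed

lemma moebius_unfold:
  assumes "\<forall>J\<in>P. finite J"
  shows "moebius P I J = (if I \<in> P \<and> J \<in> P \<and> I \<subseteq> J then
      (if I = J then 1 else - (\<Sum>L\<in>{L\<in>P. I \<subseteq> L \<and> L \<subset> J}. moebius P I L)) else 0)"
  unfolding moebius_eq_moebius_rec[OF assms]
  using assms by (subst moebius_rec.simps) auto

lemma sum_moebius_upto:
  assumes "finite P" "\<forall>J\<in>P. finite J" "I \<in> P" "K \<in> P"
  shows "(\<Sum>J\<in>{J\<in>P. I \<subseteq> J \<and> J \<subseteq> K}. moebius P I J) = (if K = I then 1 else 0)"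
proof (cases "I \<subseteq> K \<and> K \<noteq> I")
  case True
  then have "{J\<in>P. I \<subseteq> J \<and> J \<subseteq> K} = insert K {L\<in>P. I \<subseteq> L \<and> L \<subset> K}"
    using assms(4) by auto
  moreover have "moebius P I K = - (\<Sum>L\<in>{L\<in>P. I \<subseteq> L \<and> L \<subset> K}. moebius P I L)"
    using moebius_unfold[OF assms(2), of I K] assms(3,4) True by auto
  ultimately show ?thesis
    using assms(1) True by simp
next
  case False
  then have "{J\<in>P. I \<subseteq> J \<and> J \<subseteq> K} = (if K = I then {I} else {})"
    using assms(3) by auto
  then show ?thesis
    using moebius_unfold[OF assms(2), of I I] assms(3) by simp
qed

lemma ex_upper_sum_representation:
  fixes f :: "'a::order \<Rightarrow> 'b::ab_group_add"
  assumes "finite P"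
  shows "\<exists>h. \<forall>x\<in>P. f x = (\<Sum>y\<in>{y\<in>P. x \<le> y}. h y)"
  using assms
proof (induction P rule: finite_psubset_induct)
  case (psubset P)
  show ?case
  proof (cases "P = {}")
    case False
    obtain m where m: "m \<in> P" and m_minimal: "\<forall>b\<in>P. b \<le> m \<longrightarrow> m = b"
      using finite_has_minimal[OF psubset.hyps False] by blast
    obtain h where h: "\<forall>x\<in>P - {m}. f x = (\<Sum>y\<in>{y\<in>P - {m}. x \<le> y}. h y)"
      using psubset.IH[of "P - {m}"] m by blast
    define h' where "h' = h(m := f m - (\<Sum>y\<in>{y\<in>P - {m}. m \<le> y}. h y))"
    have h'_eq: "(\<Sum>y\<in>{y\<in>P - {m}. x \<le> y}. h' y) = (\<Sum>y\<in>{y\<in>P - {m}. x \<le> y}. h y)" for x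
      by (intro sum.cong) (auto simp: h'_def)
    have "f x = (\<Sum>y\<in>{y\<in>P. x \<le> y}. h' y)" if "x \<in> P" for x
    proof (cases "x = m")
      case True
      then have "{y\<in>P. x \<le> y} = insert m {y\<in>P - {m}. m \<le> y}"
        using m by auto
      then show ?thesis
        using True psubset.hyps h'_eq[of m] by (simp add: h'_def)
    next
      case False
      then have "{y\<in>P. x \<le> y} = {y\<in>P - {m}. x \<le> y}"
        using m_minimal that by auto
      then show ?thesis
        using False that h h'_eq[of x] by simp
    qed
    then show ?thesis
      by blast
  qed simp
qed

text \<open>The recursion defining moebius only says that it is a left inverse of the zeta
  transform (sum_moebius_upto); since the zeta transform is surjective
  (ex_upper_sum_representation), it is also a right inverse.\<close>

theorem moebius_inversion:
  fixes f :: "'a set \<Rightarrow> int"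
  assumes fin: "finite P" "\<forall>J\<in>P. finite J" and "I \<in> P"
  shows "(\<Sum>J\<in>{J\<in>P. I \<subseteq> J}. \<Sum>K\<in>{K\<in>P. J \<subseteq> K}. moebius P J K * f K) = f I"
proof -
  obtain h where h: "\<forall>x\<in>P. f x = (\<Sum>y\<in>{y\<in>P. x \<subseteq> y}. h y)"
    using ex_upper_sum_representation[OF fin(1)] by blast
  have "(\<Sum>K\<in>{K\<in>P. J \<subseteq> K}. moebius P J K * f K) = h J" if J: "J \<in> P" for J
  proof -
    have "(\<Sum>K\<in>{K\<in>P. J \<subseteq> K}. moebius P J K * f K)
        = (\<Sum>K\<in>P. \<Sum>L\<in>P. if J \<subseteq> K \<and> K \<subseteq> L then moebius P J K * h L else 0)"
      using h fin(1) by (auto simp: sum.inter_filter sum_distrib_left intro!: sum.cong)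
    also have "\<dots> = (\<Sum>L\<in>P. h L * (\<Sum>K\<in>{K\<in>P. J \<subseteq> K \<and> K \<subseteq> L}. moebius P J K))"
      using fin(1) by (subst sum.swap) (auto simp: sum.inter_filter sum_distrib_left intro!: sum.cong)
    also have "\<dots> = (\<Sum>L\<in>P. if L = J then h L else 0)"
      using sum_moebius_upto[OF fin J] by (intro sum.cong) auto
    also have "\<dots> = h J"
      using J fin(1) by simp
    finally show ?thesis .
  qed
  then show ?thesis
    using h assms(3) by simp
qed

lemma four_block_mat_one:
  "four_block_mat (1\<^sub>m a) (0\<^sub>m a b) (0\<^sub>m b a) (1\<^sub>m b :: 'k::field mat) = 1\<^sub>m (a + b)"
  by (rule eq_matI) auto

lemma fst_rep_pow: "fst (rep_pow N k) x = k * fst N x"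
  by (induction k) (auto simp: rep_zero_def rep_dsum_def)

lemma snd_rep_pow_diag:
  assumes "fst N x = 1" "snd N x x = 1\<^sub>m 1"
  shows "snd (rep_pow N k) x x = (1\<^sub>m k :: 'k::field mat)"
proof (induction k)
  case 0
  then show ?case
    by (auto simp: rep_zero_def)
next
  case (Suc k)
  then show ?case
    using assms four_block_mat_one[of 1 k] by (simp add: rep_dsum_def fst_rep_pow)
qed

lemma is_rep_subset: "is_rep S M \<Longrightarrow> T \<subseteq> S \<Longrightarrow> is_rep T M"
  unfolding is_rep_def by blast

lemma summand_mult_singleton:
  fixes M :: "'k::field rep"
  assumes "is_rep {v} M"
  shows "summand_mult {v} (interval_rep {v} :: 'k rep) M = fst M v"
  unfolding summand_mult_def
proof (rule Greatest_equality)
  let ?N = "interval_rep {v} :: 'k rep"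
  let ?d = "fst M v"
  let ?X = "rep_dsum (rep_pow ?N ?d) rep_zero"
  have "(0\<^sub>m 0 0 :: 'k mat) = 1\<^sub>m 0"
    by (rule eq_matI) auto
  then have X: "fst ?X v = ?d" "snd ?X v v = 1\<^sub>m ?d"
    using snd_rep_pow_diag[of ?N v ?d] four_block_mat_one[of ?d 0]
    by (simp_all add: rep_dsum_def fst_rep_pow rep_zero_def interval_rep_def)
  have "invertible_mat (1\<^sub>m ?d :: 'k mat)"
    unfolding invertible_mat_def inverts_mat_def by (intro conjI exI[of _ "1\<^sub>m ?d"]) auto
  then have "rep_iso {v} M ?X"
    using X assms unfolding rep_iso_def is_rep_def by (intro exI[of _ "\<lambda>x. 1\<^sub>m ?d"]) auto
  moreover have "is_rep {v} (rep_zero :: 'k rep)"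
    by (auto simp: is_rep_def rep_zero_def)
  ultimately show "\<exists>Y. is_rep {v} Y \<and> rep_iso {v} M (rep_dsum (rep_pow ?N ?d) Y)"
    by blast
next
  fix k
  assume "\<exists>Y. is_rep {v} Y \<and> rep_iso {v} M (rep_dsum (rep_pow (interval_rep {v} :: 'k rep) k) Y)"
  then obtain Y and \<phi> :: "vert \<Rightarrow> 'k mat" where
    "\<phi> v \<in> carrier_mat (fst (rep_dsum (rep_pow (interval_rep {v} :: 'k rep) k) Y) v) (fst M v)"
    "invertible_mat (\<phi> v)"
    unfolding rep_iso_def by blast
  then have "k + fst Y v = fst M v"
    unfolding invertible_mat_def by (simp add: rep_dsum_def fst_rep_pow interval_rep_def)
  then show "k \<le> fst M v"
    by simp
qed

lemma finite_grid_verts: "finite (grid_verts m n)"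
  by (rule finite_subset[of _ "{1..m} \<times> {1..n}"]) (auto simp: grid_verts_def)

lemma finite_intervals: "finite (intervals m n)"
  by (rule finite_subset[of _ "Pow (grid_verts m n)"]) (auto simp: intervals_def finite_grid_verts)

lemma finite_interval: "I \<in> intervals m n \<Longrightarrow> finite I"
  unfolding intervals_def using finite_grid_verts finite_subset by blast

lemma singleton_in_intervals: "v \<in> grid_verts m n \<Longrightarrow> {v} \<in> intervals m n"
  unfolding intervals_def connected_verts_def convex_verts_def vle_def
  by (auto simp: prod_eq_iff)

lemma ess_verts_singleton: "ess_verts m n e {v} = {v}"
  by (cases e) (auto simp: ess_verts_def sources_def sinks_def grid_arrow_def prod_eq_iff)

lemma compressed_mult_singleton:
  "is_rep {v} M \<Longrightarrow> compressed_mult m n e M {v} = fst M v"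
  by (simp add: compressed_mult_def ess_verts_singleton summand_mult_singleton)

theorem mainTheorem16:
  fixes m n :: nat and M :: "'k::field rep" and e :: ess
  assumes "1 \<le> m" and "1 \<le> n"
    and "is_rep (grid_verts m n) M"
  shows "\<forall>v\<in>grid_verts m n.
    (\<Sum>I\<in>intervals m n. moebius_inv_mult m n e M I * int (fst (interval_rep I :: 'k rep) v))
      = int (fst M v)"
proof
  fix v
  assume v: "v \<in> grid_verts m n"
  let ?P = "intervals m n"
  have "(\<Sum>I\<in>?P. moebius_inv_mult m n e M I * int (fst (interval_rep I :: 'k rep) v))
      = (\<Sum>I\<in>{I\<in>?P. {v} \<subseteq> I}. moebius_inv_mult m n e M I)"
    unfolding sum.inter_filter[OF finite_intervals] by (intro sum.cong) (auto simp: interval_rep_def)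
  also have "\<dots> = int (compressed_mult m n e M {v})"
    unfolding moebius_inv_mult_def
    by (rule moebius_inversion[OF finite_intervals _ singleton_in_intervals[OF v]])
      (blast intro: finite_interval)
  also have "\<dots> = int (fst M v)"
    using is_rep_subset[OF assms(3)] v by (simp add: compressed_mult_singleton)
  finally show "(\<Sum>I\<in>?P. moebius_inv_mult m n e M I * int (fst (interval_rep I :: 'k rep) v))
      = int (fst M v)" .
qed

end
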